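(* Let $T$ be an $S$-regular matrix with vertex weights $b\in\mathbb{R}^k$ and edge weights $F\in M_k(\mathbb{C})$, whose underlying graph $G=(V,E)$ has equitable partition $V_1,\dots,V_k$ with quotient matrix $S=(s_{ij})$ and cell function $\tau$. Let $M=(S\circ F)+\operatorname{diag}(b)$, where $S\circ F$ is the entrywise product. Then: (1) $M$ is diagonalizable; (2) if $\lambda$ is an eigenvalue of $M$ with eigenvector $\psi\in\mathbb{R}^k$, then $\lambda$ is an eigenvalue of $T$ with eigenvector $\overline{\psi}\in\mathbb{R}^{|V|}$ defined by $\overline{\psi}(v)=\psi(\tau(v))$; (3) if $\phi$ is an eigenvector of $T$ whose eigenvalue is not an eigenvalue of $M$, then $\sum_{v\in V_i}\phi(v)=0$ for every $1\le i\le k$, and $\sum_{v\in V}\phi(v)=0$.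
   Context: All graphs are simple, undirected and connected. A graph $G=(V,E)$ is $S$-regular, for a $k\times k$ matrix $S=(s_{ij})$ with nonnegative integer entries, if $V$ has a partition into nonempty cells $V_1,\dots,V_k$ such that every $v\in V_i$ has exactly $s_{ij}$ neighbours in $V_j$. Write $n_i=|V_i|$; then $s_{ij}n_i=s_{ji}n_j$ for all $i,j$. The cell function $\tau:V\to\{1,\dots,k\}$ sends $v\in V_i$ to $i$. The underlying graph of a matrix $T$ indexed by a set $V$ is the graph on $V$ with an edge $uv$ ($u\neq v$) iff $T_{uv}\neq 0$. An $S$-regular matrix is a Hermitian matrix $T$ indexed by $V$ such that: its underlying graph $G$ (ignoring loops) is $S$-regular with partition $V_1,\dots,V_k$; there is $b\in\mathbb{R}^k$ (vertex weights) with $T_{uu}=b(i)$ for $u\in V_i$; and there is $F\in M_k(\mathbb{C})$ (edge weights) with $F_{ij}\neq 0$ for all $i,j$ such that $T_{uv}=F_{ij}$ whenever $u\in V_i$, $v\in V_j$ are adjacent in $G$ (and $T_{uv}=0$ for distinct nonadjacent $u,v$). *)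

theory Defs
  imports "HOL-Analysis.Analysis"
begin

text \<open>Vertices are the elements of a finite type 'v; cells are indexed by a finite type 'k
  (k = CARD('k)). Matrices indexed by V are complex^'v^'v, by cells complex^'k^'k.\<close>

definition hermitian_mat :: "complex^'n^'n \<Rightarrow> bool" where
  "hermitian_mat T \<longleftrightarrow> (\<forall>u v. T$u$v = cnj (T$v$u))"

definition und_adj :: "complex^'n^'n \<Rightarrow> 'n \<Rightarrow> 'n \<Rightarrow> bool" where
  "und_adj T u v \<longleftrightarrow> u \<noteq> v \<and> T$u$v \<noteq> 0"

definition graph_connected :: "('n \<Rightarrow> 'n \<Rightarrow> bool) \<Rightarrow> bool" where
  "graph_connected E \<longleftrightarrow> (\<forall>u v. (E\<^sup>*\<^sup>*) u v)"

definition S_regular_graph :: "('v \<Rightarrow> 'v \<Rightarrow> bool) \<Rightarrow> nat^'k^'k \<Rightarrow> ('v \<Rightarrow> 'k) \<Rightarrow> bool" where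
  "S_regular_graph E S tau \<longleftrightarrow> surj tau \<and>
     (\<forall>v j. card {u. E v u \<and> tau u = j} = S$(tau v)$j)"

definition S_regular_matrix ::
  "complex^'v^'v \<Rightarrow> nat^'k^'k \<Rightarrow> ('v \<Rightarrow> 'k) \<Rightarrow> real^'k \<Rightarrow> complex^'k^'k \<Rightarrow> bool" where
  "S_regular_matrix T S tau b F \<longleftrightarrow>
     hermitian_mat T \<and>
     graph_connected (und_adj T) \<and>
     S_regular_graph (und_adj T) S tau \<and>
     (\<forall>u. T$u$u = complex_of_real (b$(tau u))) \<and>
     (\<forall>i j. F$i$j \<noteq> 0) \<and>
     (\<forall>u v. und_adj T u v \<longrightarrow> T$u$v = F$(tau u)$(tau v))"

definition quotient_mat :: "nat^'k^'k \<Rightarrow> real^'k \<Rightarrow> complex^'k^'k \<Rightarrow> complex^'k^'k" where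
  "quotient_mat S b F = (\<chi> i j. of_nat (S$i$j) * F$i$j + (if i = j then complex_of_real (b$i) else 0))"

definition diagonalizable_mat :: "complex^'n^'n \<Rightarrow> bool" where
  "diagonalizable_mat A \<longleftrightarrow>
     (\<exists>P D::complex^'n^'n. invertible P \<and> (\<forall>i j. i \<noteq> j \<longrightarrow> D$i$j = 0) \<and>
        A = P ** D ** matrix_inv P)"

definition is_eigenvector :: "complex^'n^'n \<Rightarrow> complex \<Rightarrow> complex^'n \<Rightarrow> bool" where
  "is_eigenvector A lam x \<longleftrightarrow> x \<noteq> 0 \<and> A *v x = lam *s x"

definition is_eigenvalue :: "complex^'n^'n \<Rightarrow> complex \<Rightarrow> bool" where
  "is_eigenvalue A lam \<longleftrightarrow> (\<exists>x. is_eigenvector A lam x)"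

end

theory Submission
  imports Defs
begin

(* Counting the edges between the cells V_i and V_j gives n_i s_ij = n_j s_ji; together with T being
   Hermitian this makes M self-adjoint for the inner product weighted by the cell sizes n_i, so
   diag(sqrt n) M diag(sqrt n)^-1 is Hermitian and M is diagonalizable by the spectral theorem.
   Lifting psi to psi o tau turns M into T, and averaging over the cells turns T into M: hence the
   cell averages of an eigenvector of T form an eigenvector of M for the same eigenvalue, unless
   they all vanish. *)

section \<open>The standard Hermitian product on complex vectors\<close>

definition cinner :: "complex^'n \<Rightarrow> complex^'n \<Rightarrow> complex" where
  "cinner x y = (\<Sum>i\<in>UNIV. cnj (x$i) * y$i)"

lemma cinner_add_left: "cinner (x + y) z = cinner x z + cinner y z"
  by (simp add: cinner_def sum.distrib algebra_simps)

lemma cinner_add_right: "cinner x (y + z) = cinner x y + cinner x z"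
  by (simp add: cinner_def sum.distrib algebra_simps)

lemma cinner_diff_right: "cinner x (y - z) = cinner x y - cinner x z"
  by (simp add: cinner_def sum_subtractf algebra_simps)

lemma cinner_scale_left: "cinner (c *s x) y = cnj c * cinner x y"
  by (simp add: cinner_def sum_distrib_left algebra_simps)

lemma cinner_scale_right: "cinner x (c *s y) = c * cinner x y"
  by (simp add: cinner_def sum_distrib_left algebra_simps)

lemma cinner_zero_left [simp]: "cinner 0 y = 0"
  by (simp add: cinner_def)

lemma cinner_zero_right [simp]: "cinner x 0 = 0"
  by (simp add: cinner_def)

lemma cinner_commute: "cinner y x = cnj (cinner x y)"
  by (simp add: cinner_def mult.commute)

lemma cinner_sum_right: "cinner x (\<Sum>a\<in>A. f a) = (\<Sum>a\<in>A. cinner x (f a))"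
  unfolding cinner_def by (simp add: sum_distrib_left) (rule sum.swap)

lemma Re_cinner: "Re (cinner x y) = inner x y"
  by (simp add: cinner_def inner_vec_def inner_complex_def)

lemma cinner_self: "cinner x x = of_real ((norm x)\<^sup>2)"
proof (rule complex_eqI)
  show "Re (cinner x x) = Re (of_real ((norm x)\<^sup>2))"
    by (simp add: Re_cinner power2_norm_eq_inner)
  show "Im (cinner x x) = Im (of_real ((norm x)\<^sup>2))"
    by (simp add: cinner_def Im_sum)
qed

lemma cinner_self_eq_0 [simp]: "cinner x x = 0 \<longleftrightarrow> x = 0"
  by (simp add: cinner_self)

lemma continuous_on_cinner [continuous_intros]:
  "continuous_on S f \<Longrightarrow> continuous_on S g \<Longrightarrow> continuous_on S (\<lambda>y. cinner (f y) (g y))"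
  unfolding cinner_def by (intro continuous_intros)

lemma hermitian_mat_cinner:
  assumes "hermitian_mat A"
  shows "cinner (A *v x) y = cinner x (A *v y)"
proof -
  have herm: "cnj (A$i$j) = A$j$i" for i j
    using assms unfolding hermitian_mat_def by (metis complex_cnj_cnj)
  have "cinner (A *v x) y = (\<Sum>i\<in>UNIV. \<Sum>j\<in>UNIV. cnj (x$j) * (cnj (A$i$j) * y$i))"
    by (simp add: cinner_def matrix_vector_mult_def sum_distrib_left sum_distrib_right mult_ac)
  also have "\<dots> = (\<Sum>j\<in>UNIV. \<Sum>i\<in>UNIV. cnj (x$j) * (A$j$i * y$i))"
    by (subst sum.swap) (simp only: herm)
  also have "\<dots> = cinner x (A *v y)"
    by (simp add: cinner_def matrix_vector_mult_def sum_distrib_left)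
  finally show ?thesis .
qed

lemma scaleR_eq_of_real_smult: "c *\<^sub>R x = complex_of_real c *s (x :: complex^'n)"
  by (simp add: vec_eq_iff scaleR_conv_of_real[where 'a=complex])

lemma vec_subspace_imp_subspace:
  fixes U :: "(complex^'n) set"
  assumes "vec.subspace U" shows "subspace U"
  using assms unfolding subspace_def vec.subspace_def by (simp add: scaleR_eq_of_real_smult)

section \<open>The spectral theorem for Hermitian matrices\<close>

lemma quadratic_nonpos_imp_linear_coeff_zero:
  fixes a c :: real
  assumes nonpos: "\<And>t. 2 * t * a + t\<^sup>2 * c \<le> 0"
  shows "a = 0"
proof -
  define d where "d = \<bar>c\<bar> + 1"
  have d: "d > 0" "2 * d + c > 0"
    unfolding d_def by (simp_all add: abs_if)
  have "a\<^sup>2 * (2 * d + c) = (2 * (a / d) * a + (a / d)\<^sup>2 * c) * d\<^sup>2"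
    using d by (simp add: field_simps power2_eq_square)
  also have "\<dots> \<le> 0"
    using nonpos[of "a / d"] by (simp add: mult_nonpos_nonneg)
  finally have "a\<^sup>2 \<le> 0"
    using d by (simp add: mult_le_0_iff)
  then show ?thesis by simp
qed

lemma hermitian_nonpos_form_isotropic_imp_kernel:
  fixes G :: "complex^'n^'n"
  assumes herm: "hermitian_mat G" and U: "vec.subspace U"
    and invariant: "\<And>y. y \<in> U \<Longrightarrow> G *v y \<in> U"
    and nonpos: "\<And>y. y \<in> U \<Longrightarrow> Re (cinner y (G *v y)) \<le> 0"
    and v: "v \<in> U" "Re (cinner v (G *v v)) = 0"
  shows "G *v v = 0"
proof -
  (* t \<mapsto> Re <v + t z, G (v + t z)> is a nonpositive quadratic without constant term *)
  have Re_zero: "Re (cinner z (G *v v)) = 0" if z: "z \<in> U" for z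
  proof (rule quadratic_nonpos_imp_linear_coeff_zero)
    fix t :: real
    define p where "p = v + complex_of_real t *s z"
    have "p \<in> U"
      unfolding p_def using U v z by (intro vec.subspace_add vec.subspace_scale)
    have "cinner v (G *v z) = cnj (cinner z (G *v v))"
      using hermitian_mat_cinner[OF herm, of v z] cinner_commute[of z "G *v v"] by simp
    then have "Re (cinner p (G *v p)) = 2 * t * Re (cinner z (G *v v)) + t\<^sup>2 * Re (cinner z (G *v z))"
      using v(2) unfolding p_def
      by (simp add: matrix_vector_right_distrib vector_scalar_commute cinner_add_left cinner_add_right
          cinner_scale_left cinner_scale_right power2_eq_square algebra_simps)
    with nonpos[OF \<open>p \<in> U\<close>]
    show "2 * t * Re (cinner z (G *v v)) + t\<^sup>2 * Re (cinner z (G *v z)) \<le> 0" by simp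
  qed
  have "cinner z (G *v v) = 0" if z: "z \<in> U" for z
  proof (rule complex_eqI)
    show "Re (cinner z (G *v v)) = Re 0"
      using Re_zero[OF z] by simp
    show "Im (cinner z (G *v v)) = Im 0"
      using Re_zero[OF vec.subspace_scale[OF U z, of \<i>]] by (simp add: cinner_scale_left)
  qed
  from this[OF invariant[OF v(1)]] show ?thesis by simp
qed

lemma hermitian_mat_invariant_subspace_has_eigenvector:
  fixes A :: "complex^'n^'n"
  assumes herm: "hermitian_mat A" and U: "vec.subspace U"
    and invariant: "\<And>y. y \<in> U \<Longrightarrow> A *v y \<in> U" and nontrivial: "U \<noteq> {0}"
  shows "\<exists>v\<in>U. \<exists>lam. is_eigenvector A lam v"
proof -
  have U_real: "subspace U"
    using U by (rule vec_subspace_imp_subspace)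
  define K where "K = U \<inter> sphere 0 1"
  have "compact K"
    unfolding K_def using closed_subspace[OF U_real] by (intro closed_Int_compact compact_sphere)
  obtain u where "u \<in> U" "u \<noteq> 0"
    using nontrivial vec.subspace_0[OF U] by blast
  then have "(1 / norm u) *\<^sub>R u \<in> K"
    unfolding K_def using U_real by (simp add: subspace_scale)
  define q where "q y = Re (cinner y (A *v y))" for y
  (* A maximiser v of the Rayleigh quotient on U makes A - q v nonpositive on U and isotropic at v. *)
  have "continuous_on K q"
    unfolding q_def by (intro continuous_intros)
  then obtain v where "v \<in> K" and v_max: "\<And>y. y \<in> K \<Longrightarrow> q y \<le> q v"
    using continuous_attains_sup[OF \<open>compact K\<close>] \<open>_ \<in> K\<close> by blast
  then have "v \<in> U" and "norm v = 1"
    unfolding K_def by auto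
  define G where "G = A - mat (complex_of_real (q v))"
  have G_apply: "G *v y = A *v y - complex_of_real (q v) *s y" for y
    unfolding G_def matrix_vector_mult_diff_rdistrib
    by (simp add: vec_eq_iff matrix_vector_mult_def mat_def if_distrib[of "\<lambda>a. a * _"] cong: if_cong)
  have form_G: "Re (cinner y (G *v y)) = q y - q v * (norm y)\<^sup>2" for y
    unfolding G_apply q_def by (simp add: cinner_diff_right cinner_scale_right cinner_self)
  have G_nonpos: "Re (cinner y (G *v y)) \<le> 0" if "y \<in> U" for y
  proof (cases "y = 0")
    case False
    define c where "c = 1 / norm y"
    have "c *\<^sub>R y \<in> K"
      unfolding K_def c_def using \<open>y \<in> U\<close> U_real False by (simp add: subspace_scale)
    have "q (c *\<^sub>R y) = c\<^sup>2 * q y"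
      unfolding q_def scaleR_eq_of_real_smult
      by (simp add: vector_scalar_commute cinner_scale_left cinner_scale_right power2_eq_square)
    then have "q y = (norm y)\<^sup>2 * q (c *\<^sub>R y)"
      unfolding c_def using False by (simp add: field_simps)
    also have "\<dots> \<le> (norm y)\<^sup>2 * q v"
      using v_max[OF \<open>c *\<^sub>R y \<in> K\<close>] by (simp add: mult_left_mono)
    finally show ?thesis
      unfolding form_G by (simp add: mult.commute)
  qed simp
  have G_herm: "hermitian_mat G"
    unfolding hermitian_mat_def
  proof (intro allI)
    fix i j
    have "A$i$j = cnj (A$j$i)"
      using herm unfolding hermitian_mat_def by blast
    then show "G$i$j = cnj (G$j$i)"
      unfolding G_def by (simp add: mat_def)
  qed
  have G_invariant: "G *v y \<in> U" if "y \<in> U" for y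
    unfolding G_apply using U that invariant by (intro vec.subspace_diff vec.subspace_scale)
  have "Re (cinner v (G *v v)) = 0"
    unfolding form_G using \<open>norm v = 1\<close> by simp
  with G_herm U G_invariant G_nonpos \<open>v \<in> U\<close> have "G *v v = 0"
    by (rule hermitian_nonpos_form_isotropic_imp_kernel)
  then have "is_eigenvector A (complex_of_real (q v)) v"
    using \<open>norm v = 1\<close> unfolding is_eigenvector_def G_apply by auto
  with \<open>v \<in> U\<close> show ?thesis by blast
qed

lemma diagonalizable_matI:
  fixes A P Q D :: "complex^'n^'n"
  assumes QP: "Q ** P = mat 1" and AP: "A ** P = P ** D" and D: "\<And>i j. i \<noteq> j \<Longrightarrow> D$i$j = 0"
  shows "diagonalizable_mat A"
proof -
  have PQ: "P ** Q = mat 1"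
    using QP matrix_left_right_inverse by blast
  then have "invertible P"
    unfolding invertible_def using QP by blast
  have "P ** matrix_inv P = mat 1 \<and> matrix_inv P ** P = mat 1"
    unfolding matrix_inv_def by (rule someI[of _ Q]) (use PQ QP in blast)
  then have "matrix_inv P = Q"
    by (metis QP matrix_mul_assoc matrix_mul_lid matrix_mul_rid)
  moreover have "A = P ** D ** Q"
    by (metis AP PQ matrix_mul_assoc matrix_mul_rid)
  ultimately show ?thesis
    unfolding diagonalizable_mat_def using \<open>invertible P\<close> D by metis
qed

lemma orthogonal_eigenvectors_imp_diagonalizable:
  fixes A :: "complex^'n^'n" and \<beta> :: "'n \<Rightarrow> complex^'n"
  assumes eigen: "\<And>j. is_eigenvector A (\<mu> j) (\<beta> j)"
    and orthogonal: "\<And>j l. j \<noteq> l \<Longrightarrow> cinner (\<beta> j) (\<beta> l) = 0"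
  shows "diagonalizable_mat A"
proof (rule diagonalizable_matI)
  define P :: "complex^'n^'n" where "P = (\<chi> i j. \<beta> j $ i)"
  define Q :: "complex^'n^'n" where "Q = (\<chi> j i. cnj (\<beta> j $ i) / cinner (\<beta> j) (\<beta> j))"
  define D :: "complex^'n^'n" where "D = (\<chi> i j. if i = j then \<mu> j else 0)"
  have "(Q ** P) $ j $ l = cinner (\<beta> j) (\<beta> l) / cinner (\<beta> j) (\<beta> j)" for j l
    unfolding Q_def P_def matrix_matrix_mult_def cinner_def by (simp add: sum_divide_distrib)
  moreover have "cinner (\<beta> j) (\<beta> j) \<noteq> 0" for j
    using eigen[of j] unfolding is_eigenvector_def by simp
  ultimately show "Q ** P = mat 1"
    using orthogonal by (simp add: vec_eq_iff mat_def)
  have "(A ** P) $ i $ j = (P ** D) $ i $ j" for i j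
  proof -
    have "(A ** P) $ i $ j = (A *v \<beta> j) $ i"
      unfolding P_def matrix_matrix_mult_def matrix_vector_mult_def by simp
    also have "\<dots> = \<mu> j * \<beta> j $ i"
      using eigen[of j] unfolding is_eigenvector_def by simp
    also have "\<dots> = (P ** D) $ i $ j"
      unfolding P_def D_def matrix_matrix_mult_def
      by (simp add: if_distrib[of "\<lambda>x. _ * x"] mult.commute cong: if_cong)
    finally show ?thesis .
  qed
  then show "A ** P = P ** D"
    by (simp add: vec_eq_iff)
  show "\<And>i j. i \<noteq> j \<Longrightarrow> D $ i $ j = 0"
    unfolding D_def by simp
qed

lemma cinner_orthogonal_sum:
  fixes S :: "(complex^'n) set"
  assumes "finite S" "x \<in> S" and orthogonal: "pairwise (\<lambda>x y. cinner x y = 0) S"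
  shows "cinner x (\<Sum>y\<in>S. f y *s y) = f x * cinner x x"
proof -
  have "cinner x (\<Sum>y\<in>S. f y *s y) = (\<Sum>y\<in>S. f y * cinner x y)"
    by (simp add: cinner_sum_right cinner_scale_right)
  also have "\<dots> = f x * cinner x x + (\<Sum>y\<in>S - {x}. f y * cinner x y)"
    using assms(1,2) by (rule sum.remove)
  also have "(\<Sum>y\<in>S - {x}. f y * cinner x y) = 0"
    using orthogonal \<open>x \<in> S\<close> by (intro sum.neutral) (auto dest: pairwiseD)
  finally show ?thesis by simp
qed

lemma cinner_orthogonal_imp_independent:
  fixes S :: "(complex^'n) set"
  assumes "finite S" "0 \<notin> S" and orthogonal: "pairwise (\<lambda>x y. cinner x y = 0) S"
  shows "vec.independent S"
proof (rule vec.independent_if_scalars_zero[OF \<open>finite S\<close>])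
  fix f x
  assume "(\<Sum>y\<in>S. f y *s y) = 0" and "x \<in> S"
  then have "f x * cinner x x = 0"
    using cinner_orthogonal_sum[OF \<open>finite S\<close> \<open>x \<in> S\<close> orthogonal, of f] by simp
  then show "f x = 0"
    using \<open>x \<in> S\<close> \<open>0 \<notin> S\<close> by auto
qed

text \<open>The residual of the orthogonal projection onto the span of S lies in the orthogonal complement.\<close>
lemma cinner_orthogonal_complement_trivial_imp_span:
  fixes S :: "(complex^'n) set"
  assumes "finite S" "0 \<notin> S" and orthogonal: "pairwise (\<lambda>x y. cinner x y = 0) S"
    and complement: "\<And>z. (\<forall>b\<in>S. cinner b z = 0) \<Longrightarrow> z = 0"
  shows "y \<in> vec.span S"
proof -
  define p where "p = (\<Sum>b\<in>S. (cinner b y / cinner b b) *s b)"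
  have "cinner c p = cinner c y" if "c \<in> S" for c
    unfolding p_def using cinner_orthogonal_sum[OF \<open>finite S\<close> that orthogonal] that \<open>0 \<notin> S\<close>
    by auto
  then have "y = p"
    using complement[of "y - p"] by (simp add: cinner_diff_right)
  also have "p \<in> vec.span S"
    unfolding p_def by (intro vec.span_sum vec.span_scale vec.span_base)
  finally show ?thesis .
qed

lemma eigenvector_orthogonal_complement_invariant:
  assumes herm: "hermitian_mat A" and "is_eigenvector A lam b" and "cinner b y = 0"
  shows "cinner b (A *v y) = 0"
proof -
  have "cinner b (A *v y) = cinner (A *v b) y"
    using hermitian_mat_cinner[OF herm] by simp
  also have "\<dots> = cnj lam * cinner b y"
    using \<open>is_eigenvector A lam b\<close> unfolding is_eigenvector_def by (simp add: cinner_scale_left)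
  finally show ?thesis
    using \<open>cinner b y = 0\<close> by simp
qed

theorem hermitian_mat_diagonalizable:
  fixes A :: "complex^'n^'n"
  assumes herm: "hermitian_mat A"
  shows "diagonalizable_mat A"
proof -
  define eigenfamily where "eigenfamily S \<longleftrightarrow> finite S \<and> pairwise (\<lambda>x y. cinner x y = 0) S \<and>
      (\<forall>b\<in>S. \<exists>lam. is_eigenvector A lam b)" for S
  have zero_notin: "0 \<notin> S" if "eigenfamily S" for S
    using that unfolding eigenfamily_def is_eigenvector_def by blast
  have "card S < CARD('n) + 1" if "eigenfamily S" for S
    using vec.independent_card_le_dim[OF subset_UNIV cinner_orthogonal_imp_independent[OF _ zero_notin[OF that]]]
      that unfolding eigenfamily_def by (simp add: card_cart_basis)
  moreover have "eigenfamily {}"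
    unfolding eigenfamily_def by simp
  ultimately obtain S where S: "eigenfamily S" and S_max: "\<And>S'. eigenfamily S' \<Longrightarrow> card S' \<le> card S"
    using ex_has_greatest_nat[of eigenfamily "{}" card "CARD('n) + 1"] by blast
  then have "finite S" and orthogonal: "pairwise (\<lambda>x y. cinner x y = 0) S"
    and eigen: "\<forall>b\<in>S. \<exists>lam. is_eigenvector A lam b"
    unfolding eigenfamily_def by auto
  define U where "U = {y. \<forall>b\<in>S. cinner b y = 0}"
  have U_subspace: "vec.subspace U"
    unfolding U_def vec.subspace_def by (simp add: cinner_add_right cinner_scale_right)
  have U_invariant: "A *v y \<in> U" if "y \<in> U" for y
    using that eigen eigenvector_orthogonal_complement_invariant[OF herm] unfolding U_def by blast
  have "U = {0}"
  proof (rule ccontr)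
    assume "U \<noteq> {0}"
    then obtain v lam where "v \<in> U" "is_eigenvector A lam v"
      using hermitian_mat_invariant_subspace_has_eigenvector[OF herm U_subspace U_invariant] by blast
    then have "v \<notin> S"
      unfolding U_def is_eigenvector_def by auto
    have "cinner b v = 0 \<and> cinner v b = 0" if "b \<in> S" for b
      using \<open>v \<in> U\<close> that cinner_commute[of b v] unfolding U_def by simp
    then have "eigenfamily (insert v S)"
      using S \<open>is_eigenvector A lam v\<close> unfolding eigenfamily_def by (auto simp: pairwise_insert)
    then show False
      using S_max[of "insert v S"] \<open>v \<notin> S\<close> \<open>finite S\<close> by simp
  qed
  then have "vec.span S = UNIV"
    using cinner_orthogonal_complement_trivial_imp_span[OF \<open>finite S\<close> zero_notin[OF S] orthogonal]
    unfolding U_def by blast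
  then have "card S = CARD('n)"
    using vec.basis_card_eq_dim[of S UNIV]
      cinner_orthogonal_imp_independent[OF \<open>finite S\<close> zero_notin[OF S] orthogonal]
    by (simp add: card_cart_basis)
  then obtain \<beta> where \<beta>: "bij_betw \<beta> (UNIV :: 'n set) S"
    using finite_same_card_bij[of "UNIV :: 'n set" S] \<open>finite S\<close> by auto
  then have \<beta>_S: "\<beta> j \<in> S" and \<beta>_inj: "inj \<beta>" for j
    by (auto simp: bij_betw_def)
  have "\<forall>j. \<exists>lam. is_eigenvector A lam (\<beta> j)"
    using eigen \<beta>_S by blast
  then obtain \<mu> where "\<And>j. is_eigenvector A (\<mu> j) (\<beta> j)"
    by (metis choice)
  moreover have "cinner (\<beta> j) (\<beta> l) = 0" if "j \<noteq> l" for j l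
    using pairwiseD[OF orthogonal \<beta>_S \<beta>_S] \<beta>_inj that by (simp add: inj_eq)
  ultimately show ?thesis
    by (rule orthogonal_eigenvectors_imp_diagonalizable)
qed

lemma diagonalizable_mat_similar:
  fixes A B Q R :: "complex^'n^'n"
  assumes "diagonalizable_mat B" and QR: "Q ** R = mat 1" and A: "A = R ** B ** Q"
  shows "diagonalizable_mat A"
proof -
  obtain P D :: "complex^'n^'n" where "invertible P" and D: "\<And>i j. i \<noteq> j \<Longrightarrow> D$i$j = 0"
    and B: "B = P ** D ** matrix_inv P"
    using assms(1) unfolding diagonalizable_mat_def by blast
  have P_inv: "matrix_inv P ** P = mat 1"
    using someI_ex[OF \<open>invertible P\<close>[unfolded invertible_def]] unfolding matrix_inv_def by blast
  have RQ: "R ** Q = mat 1"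
    using QR matrix_left_right_inverse by blast
  show ?thesis
  proof (rule diagonalizable_matI)
    show "(matrix_inv P ** Q) ** (R ** P) = mat 1"
      by (metis QR P_inv matrix_mul_assoc matrix_mul_lid)
    show "A ** (R ** P) = (R ** P) ** D"
      unfolding A B by (metis QR P_inv matrix_mul_assoc matrix_mul_rid)
  qed (use D in blast)
qed

text \<open>Conjugation by diag(sqrt w) turns A into a Hermitian matrix.\<close>
lemma weighted_hermitian_mat_diagonalizable:
  fixes A :: "complex^'n^'n" and w :: "'n \<Rightarrow> real"
  assumes pos: "\<And>i. w i > 0"
    and weighted_hermitian: "\<And>i j. complex_of_real (w i) * cnj (A$i$j) = complex_of_real (w j) * A$j$i"
  shows "diagonalizable_mat A"
proof -
  define d where "d i = complex_of_real (sqrt (w i))" for i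
  have d_nonzero: "d i \<noteq> 0" and d_square: "d i * d i = complex_of_real (w i)" and d_real: "cnj (d i) = d i" for i
    unfolding d_def using pos[of i] by (simp_all flip: of_real_mult)
  define B :: "complex^'n^'n" where "B = (\<chi> i j. d i * A$i$j / d j)"
  have "hermitian_mat B"
    unfolding hermitian_mat_def
  proof (intro allI)
    fix i j
    have "d i * d i * A$i$j = d j * d j * cnj (A$j$i)"
      unfolding d_square using weighted_hermitian[of j i] by simp
    then show "B$i$j = cnj (B$j$i)"
      unfolding B_def using d_nonzero[of i] d_nonzero[of j] by (simp add: d_real field_simps)
  qed
  then have "diagonalizable_mat B"
    by (rule hermitian_mat_diagonalizable)
  moreover have "(\<chi> i j. if i = j then d i else 0) ** (\<chi> i j. if i = j then 1 / d i else 0) = mat 1"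
    using d_nonzero
    by (simp add: vec_eq_iff mat_def matrix_matrix_mult_def if_distrib[of "\<lambda>x. x * _"] cong: if_cong)
  moreover have "A = (\<chi> i j. if i = j then 1 / d i else 0) ** B ** (\<chi> i j. if i = j then d i else 0)"
    using d_nonzero
    by (simp add: vec_eq_iff B_def matrix_matrix_mult_def if_distrib[of "\<lambda>x. x * _"]
        if_distrib[of "\<lambda>x. _ * x"] if_distrib[of "\<lambda>x. x / _"] cong: if_cong)
  ultimately show ?thesis
    by (rule diagonalizable_mat_similar)
qed

section \<open>Equitable partitions and the quotient matrix\<close>

lemma sum_fibres_card:
  fixes tau :: "'v::finite \<Rightarrow> 'k::finite"
  shows "(\<Sum>v | P v. h (tau v)) = (\<Sum>j\<in>UNIV. of_nat (card {v. P v \<and> tau v = j}) * h j)"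
proof -
  have "(\<Sum>v | P v. h (tau v)) = (\<Sum>j\<in>UNIV. \<Sum>v | P v \<and> tau v = j. h (tau v))"
    using sum.group[of "{v. P v}" UNIV tau "\<lambda>v. h (tau v)"] by simp
  also have "\<dots> = (\<Sum>j\<in>UNIV. \<Sum>v | P v \<and> tau v = j. h j)"
    by (intro sum.cong) auto
  finally show ?thesis
    by simp
qed

lemma sum_UNIV_fibres:
  fixes tau :: "'v::finite \<Rightarrow> 'k::finite"
  shows "(\<Sum>v\<in>UNIV. f v) = (\<Sum>j\<in>UNIV. \<Sum>v | tau v = j. f v)"
  using sum.group[of UNIV UNIV tau f] by simp

lemma quotient_mat_mult:
  "(quotient_mat S b F *v x)$i = complex_of_real (b$i) * x$i + (\<Sum>j\<in>UNIV. of_nat (S$i$j) * F$i$j * x$j)"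
  unfolding quotient_mat_def matrix_vector_mult_def
  by (simp add: distrib_right sum.distrib if_distrib[of "\<lambda>a. a * _"] cong: if_cong)

locale S_regular =
  fixes T :: "complex^'v^'v" and S :: "nat^'k^'k" and tau :: "'v \<Rightarrow> 'k"
    and b :: "real^'k" and F :: "complex^'k^'k"
  assumes S_regular: "S_regular_matrix T S tau b F"
begin

definition cell_size :: "'k \<Rightarrow> nat" where
  "cell_size i = card {v. tau v = i}"

lemma hermitian: "hermitian_mat T"
  and surj_tau: "surj tau"
  and card_neighbours: "card {u. und_adj T v u \<and> tau u = j} = S$(tau v)$j"
  and entry_diag: "T$u$u = complex_of_real (b$(tau u))"
  and entry_adj: "und_adj T u v \<Longrightarrow> T$u$v = F$(tau u)$(tau v)"
  using S_regular unfolding S_regular_matrix_def S_regular_graph_def by blast+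

lemma adj_sym: "und_adj T u v \<Longrightarrow> und_adj T v u"
  using hermitian unfolding und_adj_def hermitian_mat_def by (metis complex_cnj_zero_iff)

lemma entry:
  "T$u$v = (if u = v then complex_of_real (b$(tau u)) else 0) + (if und_adj T u v then F$(tau u)$(tau v) else 0)"
  using entry_diag[of u] entry_adj[of u v] unfolding und_adj_def by auto

lemma cell_size_pos: "cell_size i > 0"
proof -
  obtain v where "tau v = i"
    using surj_tau by (metis surjD)
  then show ?thesis
    unfolding cell_size_def by (auto simp: card_gt_0_iff)
qed

text \<open>Both sides count the edges between the cells i and j.\<close>
lemma cell_size_mult_S_sym: "cell_size i * S$i$j = cell_size j * S$j$i"
proof -
  define edges where "edges i j = {(u, v). und_adj T u v \<and> tau u = i \<and> tau v = j}" for i j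
  have card_edges: "card (edges i j) = cell_size i * S$i$j" for i j
  proof -
    have "edges i j = (SIGMA u:{u. tau u = i}. {v. und_adj T u v \<and> tau v = j})"
      unfolding edges_def by auto
    then show ?thesis
      unfolding cell_size_def by (simp add: card_SigmaI card_neighbours)
  qed
  have "edges j i = prod.swap ` edges i j"
    unfolding edges_def by (auto simp: image_iff intro: adj_sym)
  then have "card (edges j i) = card (edges i j)"
    by (simp add: card_image)
  then show ?thesis
    unfolding card_edges by simp
qed

lemma F_hermitian_on_support:
  assumes "S$i$j > 0"
  shows "F$j$i = cnj (F$i$j)"
proof -
  obtain u where "tau u = i"
    using surj_tau by (metis surjD)
  then have "{v. und_adj T u v \<and> tau v = j} \<noteq> {}"
    using card_neighbours[of u j] assms by (metis card.empty less_irrefl)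
  then obtain v where "und_adj T u v" "tau v = j"
    by blast
  then show ?thesis
    using entry_adj[of u v] entry_adj[of v u] adj_sym hermitian \<open>tau u = i\<close>
    unfolding hermitian_mat_def by metis
qed

lemma quotient_mat_weighted_hermitian:
  "complex_of_real (cell_size i) * cnj (quotient_mat S b F $i$j)
    = complex_of_real (cell_size j) * quotient_mat S b F $j$i"
proof -
  have "of_nat (cell_size i * S$i$j) * cnj (F$i$j) = of_nat (cell_size j * S$j$i) * (F$j$i :: complex)"
  proof (cases "S$i$j = 0")
    case True
    then have "S$j$i = 0"
      using cell_size_mult_S_sym[of i j] cell_size_pos[of j] by simp
    with True show ?thesis by simp
  next
    case False
    then show ?thesis
      using cell_size_mult_S_sym[of i j] F_hermitian_on_support[of i j] by simp
  qed
  then show ?thesis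
    unfolding quotient_mat_def by (auto simp: algebra_simps)
qed

lemma quotient_mat_diagonalizable: "diagonalizable_mat (quotient_mat S b F)"
  by (rule weighted_hermitian_mat_diagonalizable[of "\<lambda>i. real (cell_size i)"])
    (use cell_size_pos quotient_mat_weighted_hermitian in auto)

lemma mult_lift: "T *v (\<chi> v. psi $ tau v) = (\<chi> v. (quotient_mat S b F *v psi) $ tau v)"
proof -
  have "(T *v (\<chi> v. psi $ tau v)) $ u = (quotient_mat S b F *v psi) $ tau u" for u
  proof -
    have "(T *v (\<chi> v. psi $ tau v)) $ u = (\<Sum>v\<in>UNIV. T$u$v * psi $ tau v)"
      by (simp add: matrix_vector_mult_def)
    also have "\<dots> = complex_of_real (b $ tau u) * psi $ tau u
        + (\<Sum>v | und_adj T u v. F $ tau u $ tau v * psi $ tau v)"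
      unfolding entry
      by (simp add: distrib_right sum.distrib if_distrib[of "\<lambda>a. a * _"] sum.If_cases cong: if_cong)
    also have "(\<Sum>v | und_adj T u v. F $ tau u $ tau v * psi $ tau v)
        = (\<Sum>j\<in>UNIV. of_nat (S $ tau u $ j) * F $ tau u $ j * psi $ j)"
      using sum_fibres_card[where P = "und_adj T u" and h = "\<lambda>j. F $ tau u $ j * psi $ j" and tau = tau]
      by (simp add: card_neighbours mult.assoc)
    finally show ?thesis
      by (simp add: quotient_mat_mult)
  qed
  then show ?thesis
    by (simp add: vec_eq_iff)
qed

lemma column_sum_cell:
  "(\<Sum>u | tau u = i. T$u$v)
    = (if tau v = i then complex_of_real (b$i) else 0) + of_nat (S $ tau v $ i) * F $ i $ tau v"
proof -
  have "(\<Sum>u | tau u = i. if und_adj T u v then F $ tau u $ tau v else 0)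
      = (\<Sum>u | tau u = i. if und_adj T u v then F $ i $ tau v else 0)"
    by (rule sum.cong) auto
  also have "\<dots> = of_nat (card {u. und_adj T v u \<and> tau u = i}) * F $ i $ tau v"
  proof -
    have "{u. und_adj T u v \<and> tau u = i} = {u. und_adj T v u \<and> tau u = i}"
      using adj_sym by blast
    then show ?thesis
      by (simp add: sum.If_cases Int_def conj_commute)
  qed
  also have "\<dots> = of_nat (S $ tau v $ i) * F $ i $ tau v"
    unfolding card_neighbours ..
  finally show ?thesis
    unfolding entry by (simp add: sum.distrib sum.delta')
qed

definition cell_average :: "complex^'v \<Rightarrow> complex^'k" where
  "cell_average phi = (\<chi> i. (\<Sum>v | tau v = i. phi $ v) / of_nat (cell_size i))"

lemma cell_average_mult: "cell_average (T *v phi) = quotient_mat S b F *v cell_average phi"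
proof -
  define sigma where "sigma j = (\<Sum>v | tau v = j. phi $ v)" for j
  have "(\<Sum>u | tau u = i. (T *v phi) $ u)
      = complex_of_real (b$i) * sigma i + (\<Sum>j\<in>UNIV. of_nat (S$j$i) * F$i$j * sigma j)" for i
  proof -
    have "(\<Sum>u | tau u = i. (T *v phi) $ u) = (\<Sum>v\<in>UNIV. (\<Sum>u | tau u = i. T$u$v) * phi $ v)"
      unfolding matrix_vector_mult_def by (simp add: sum_distrib_right sum.swap[of _ "{u. tau u = i}"])
    also have "\<dots> = (\<Sum>j\<in>UNIV. ((if j = i then complex_of_real (b$i) else 0) + of_nat (S$j$i) * F$i$j) * sigma j)"
      unfolding column_sum_cell sigma_def sum_UNIV_fibres[of _ tau] by (simp add: sum_distrib_left)
    finally show ?thesis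
      by (simp add: distrib_right sum.distrib if_distrib[of "\<lambda>a. a * _"] mult.assoc cong: if_cong)
  qed
  moreover have "(quotient_mat S b F *v cell_average phi) $ i
      = (complex_of_real (b$i) * sigma i + (\<Sum>j\<in>UNIV. of_nat (S$j$i) * F$i$j * sigma j)) / of_nat (cell_size i)" for i
  proof -
    have ratio: "of_nat (S$i$j) / of_nat (cell_size j) = (of_nat (S$j$i) / of_nat (cell_size i) :: complex)" for j
      using cell_size_mult_S_sym[of i j] cell_size_pos[of i] cell_size_pos[of j]
      by (simp add: field_simps flip: of_nat_mult)
    have "(quotient_mat S b F *v cell_average phi) $ i
        = complex_of_real (b$i) * (sigma i / of_nat (cell_size i))
          + (\<Sum>j\<in>UNIV. of_nat (S$i$j) / of_nat (cell_size j) * F$i$j * sigma j)"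
      unfolding quotient_mat_mult cell_average_def sigma_def by simp
    also have "\<dots> = complex_of_real (b$i) * (sigma i / of_nat (cell_size i))
          + (\<Sum>j\<in>UNIV. of_nat (S$j$i) * F$i$j * sigma j / of_nat (cell_size i))"
      unfolding ratio by simp
    finally show ?thesis
      by (simp add: add_divide_distrib sum_divide_distrib)
  qed
  ultimately show ?thesis
    unfolding cell_average_def sigma_def by (simp add: vec_eq_iff)
qed

lemma lift_eigenvector:
  assumes "is_eigenvector (quotient_mat S b F) lam psi"
  shows "is_eigenvector T lam (\<chi> v. psi $ tau v)"
proof -
  obtain i where "psi $ i \<noteq> 0"
    using assms unfolding is_eigenvector_def by (auto simp: vec_eq_iff)
  moreover obtain v where "tau v = i"
    using surj_tau by (metis surjD)
  ultimately have "(\<chi> v. psi $ tau v) \<noteq> 0"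
    by (auto simp: vec_eq_iff)
  with assms show ?thesis
    unfolding is_eigenvector_def by (simp add: mult_lift vec_eq_iff)
qed

lemma cell_sum_eq_0:
  assumes "is_eigenvector T lam phi" and "\<not> is_eigenvalue (quotient_mat S b F) lam"
  shows "(\<Sum>v | tau v = i. phi $ v) = 0"
proof -
  have "quotient_mat S b F *v cell_average phi = lam *s cell_average phi"
    using assms(1) unfolding is_eigenvector_def cell_average_mult[symmetric]
    by (simp add: cell_average_def vec_eq_iff sum_distrib_left)
  then have "cell_average phi = 0"
    using assms(2) unfolding is_eigenvalue_def is_eigenvector_def by blast
  then have "cell_average phi $ i = 0"
    by simp
  then show ?thesis
    using cell_size_pos[of i] unfolding cell_average_def by simp
qed

end

theorem mainTheorem1:
  fixes T :: "complex^'v^'v" and S :: "nat^'k^'k" and tau :: "'v \<Rightarrow> 'k"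
    and b :: "real^'k" and F :: "complex^'k^'k"
  assumes "S_regular_matrix T S tau b F"
  shows "diagonalizable_mat (quotient_mat S b F) \<and>
         (\<forall>lam psi. is_eigenvector (quotient_mat S b F) lam psi \<longrightarrow>
            is_eigenvector T lam (\<chi> v. psi $ tau v)) \<and>
         (\<forall>lam phi. is_eigenvector T lam phi \<and> \<not> is_eigenvalue (quotient_mat S b F) lam \<longrightarrow>
            (\<forall>i. (\<Sum>v\<in>{v. tau v = i}. phi $ v) = 0) \<and> (\<Sum>v\<in>UNIV. phi $ v) = 0)"
proof -
  interpret S_regular T S tau b F
    using assms by (rule S_regular.intro)
  have "(\<Sum>v\<in>UNIV. phi $ v) = 0"
    if "is_eigenvector T lam phi" and "\<not> is_eigenvalue (quotient_mat S b F) lam" for lam phi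
    using sum_UNIV_fibres[of "\<lambda>v. phi $ v" tau] cell_sum_eq_0[OF that] by simp
  then show ?thesis
    using quotient_mat_diagonalizable lift_eigenvector cell_sum_eq_0 by blast
qed

end
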